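(* Let $G$ be a graph with $n$ nodes, degree matrix $\mathbf{D}$ and normalized graph Laplacian $\tilde{\mathbf{L}}$, and let $\tilde{\mathbf{L}}=\mathbf{U}\mathbf{\Sigma}\mathbf{U}^T$ be an eigendecomposition of $\tilde{\mathbf{L}}$. Then for any $n\times n$ permutation matrix $\mathbf{M}$, the matrix $\mathbf{D}^{1/2}\mathbf{U}\mathbf{\Sigma}^{1/2}\mathbf{M}$ is adjacency-identifying.
   Context: Graphs are finite, undirected, without self-loops and without isolated nodes; $\mathbf{A}(G)$ is the adjacency matrix, $\mathbf{L}=\mathbf{D}-\mathbf{A}(G)$ and $\tilde{\mathbf{L}}=\mathbf{I}-\mathbf{D}^{-1/2}\mathbf{A}(G)\mathbf{D}^{-1/2}$. In the eigendecomposition, $\mathbf{U}$ is orthogonal and $\mathbf{\Sigma}$ diagonal with the nonnegative eigenvalues. $d_k>0$ is a fixed constant. A matrix $\mathbf{P}\in\mathbb{R}^{n\times e}$ is adjacency-identifying if there exist $\mathbf{W}^Q,\mathbf{W}^K\in\mathbb{R}^{e\times e}$ such that $\tilde{\mathbf{P}}=\frac{1}{\sqrt{d_k}}\mathbf{P}\mathbf{W}^Q(\mathbf{P}\mathbf{W}^K)^T$ satisfies $\tilde{\mathbf{P}}_{ij}=\max_k\tilde{\mathbf{P}}_{ik}\iff\mathbf{A}(G)_{ij}=1$ for all $i,j$. *)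

theory Defs
  imports "HOL-Analysis.Analysis"
begin

definition simple_graph :: "('n::finite \<Rightarrow> 'n \<Rightarrow> bool) \<Rightarrow> bool" where
  "simple_graph E \<longleftrightarrow> (\<forall>i j. E i j \<longleftrightarrow> E j i) \<and> (\<forall>i. \<not> E i i) \<and> (\<forall>i. \<exists>j. E i j)"

definition adj_matrix :: "('n::finite \<Rightarrow> 'n \<Rightarrow> bool) \<Rightarrow> real^'n^'n" where
  "adj_matrix E = (\<chi> i j. if E i j then 1 else 0)"

definition degree :: "('n::finite \<Rightarrow> 'n \<Rightarrow> bool) \<Rightarrow> 'n \<Rightarrow> real" where
  "degree E i = real (card {j. E i j})"

definition diag_mat :: "('n::finite \<Rightarrow> real) \<Rightarrow> real^'n^'n" where
  "diag_mat f = (\<chi> i j. if i = j then f i else 0)"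

definition degree_matrix :: "('n::finite \<Rightarrow> 'n \<Rightarrow> bool) \<Rightarrow> real^'n^'n" where
  "degree_matrix E = diag_mat (degree E)"

definition degree_sqrt :: "('n::finite \<Rightarrow> 'n \<Rightarrow> bool) \<Rightarrow> real^'n^'n" where
  "degree_sqrt E = diag_mat (\<lambda>i. sqrt (degree E i))"

definition degree_inv_sqrt :: "('n::finite \<Rightarrow> 'n \<Rightarrow> bool) \<Rightarrow> real^'n^'n" where
  "degree_inv_sqrt E = diag_mat (\<lambda>i. 1 / sqrt (degree E i))"

definition norm_laplacian :: "('n::finite \<Rightarrow> 'n \<Rightarrow> bool) \<Rightarrow> real^'n^'n" where
  "norm_laplacian E = mat 1 - degree_inv_sqrt E ** adj_matrix E ** degree_inv_sqrt E"

definition is_diagonal :: "real^'n^'n \<Rightarrow> bool" where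
  "is_diagonal S \<longleftrightarrow> (\<forall>i j. i \<noteq> j \<longrightarrow> S $ i $ j = 0)"

definition diag_sqrt :: "real^'n^'n \<Rightarrow> real^'n^'n" where
  "diag_sqrt S = diag_mat (\<lambda>i. sqrt (S $ i $ i))"

definition permutation_matrix :: "real^'n^'n \<Rightarrow> bool" where
  "permutation_matrix M \<longleftrightarrow> (\<exists>p. p permutes (UNIV::'n set) \<and> M = (\<chi> i j. if p i = j then 1 else 0))"

text \<open>Adjacency-identifying (with attention scaling constant dk).\<close>
definition adjacency_identifying ::
  "real \<Rightarrow> ('n::finite \<Rightarrow> 'n \<Rightarrow> bool) \<Rightarrow> real^'e::finite^'n \<Rightarrow> bool" where
  "adjacency_identifying dk E P \<longleftrightarrow>
     (\<exists>WQ WK :: real^'e^'e.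
        let Pt = (1 / sqrt dk) *\<^sub>R ((P ** WQ) ** transpose (P ** WK)) in
        (\<forall>i j. Pt $ i $ j = Max (range (\<lambda>k. Pt $ i $ k)) \<longleftrightarrow> adj_matrix E $ i $ j = 1))"

end

theory Submission
  imports Defs
begin

text \<open>Let \<open>L = D - A\<close> be the combinatorial Laplacian. As \<open>\<Sigma>\<close> is diagonal and the
  permutation matrix \<open>M\<close> is orthogonal, \<open>P = D^(1/2) U \<Sigma>^(1/2) M\<close> has Gram matrix
  \<open>P P^T = D^(1/2) (U \<Sigma> U^T) D^(1/2) = D^(1/2) (I - D^(-1/2) A D^(-1/2)) D^(1/2) = L\<close>.
  Taking \<open>W^Q = -I\<close> and \<open>W^K = I\<close> makes the attention scores a positive multiple of \<open>-L\<close>,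
  whose row \<open>i\<close> is \<open>1\<close> at the neighbours of \<open>i\<close>, \<open>-d_i < 0\<close> on the diagonal and \<open>0\<close>
  elsewhere. Since no node is isolated, the row maximum is \<open>1\<close>, attained exactly at the
  neighbours.\<close>

definition laplacian :: "('n::finite \<Rightarrow> 'n \<Rightarrow> bool) \<Rightarrow> real^'n^'n" where
  "laplacian E = degree_matrix E - adj_matrix E"

lemma diag_mat_mult_left: "(diag_mat f ** X) $ i $ j = f i * X $ i $ j"
  by (simp add: matrix_matrix_mult_def diag_mat_def if_distrib[where f = "\<lambda>x. x * _"] cong: if_cong)

lemma diag_mat_mult_right: "(X ** diag_mat f) $ i $ j = X $ i $ j * f j"
  by (simp add: matrix_matrix_mult_def diag_mat_def if_distrib[where f = "\<lambda>x. _ * x"] cong: if_cong)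

lemma transpose_diag_mat [simp]: "transpose (diag_mat f) = diag_mat f"
  by (simp add: transpose_def diag_mat_def vec_eq_iff)

lemma diag_sqrt_mult_self:
  assumes "is_diagonal S" and "\<forall>i. S $ i $ i \<ge> 0"
  shows "diag_sqrt S ** diag_sqrt S = S"
proof -
  have "(diag_sqrt S ** diag_sqrt S) $ i $ j = S $ i $ j" for i j
    unfolding diag_sqrt_def diag_mat_mult_left
    using assms by (simp add: diag_mat_def is_diagonal_def)
  then show ?thesis by (simp add: vec_eq_iff)
qed

lemma permutation_matrix_orthogonal:
  assumes "permutation_matrix (M :: real^'n::finite^'n)"
  shows "orthogonal_matrix M"
proof -
  obtain p where p: "p permutes (UNIV :: 'n set)"
    and M: "M = (\<chi> i j. if p i = j then 1 else 0)"
    using assms unfolding permutation_matrix_def by blast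
  have "(M ** transpose M) $ i $ j = mat 1 $ i $ j" for i j
    by (simp add: M matrix_matrix_mult_def transpose_def mat_def mult_if_delta
        inj_eq[OF permutes_inj[OF p]])
  then have "M ** transpose M = mat 1"
    by (simp add: vec_eq_iff)
  then show ?thesis
    by (metis orthogonal_matrix_def matrix_left_right_inverse)
qed

lemma gram_of_diag_sqrt_factor:
  fixes X U S M :: "real^'n::finite^'n"
  assumes "is_diagonal S" and "\<forall>i. S $ i $ i \<ge> 0" and "orthogonal_matrix M"
  defines "P \<equiv> X ** U ** diag_sqrt S ** M"
  shows "P ** transpose P = X ** (U ** S ** transpose U) ** transpose X"
proof -
  have "P ** transpose P
      = X ** U ** diag_sqrt S ** (M ** transpose M) ** diag_sqrt S ** transpose U ** transpose X"
    by (simp add: P_def diag_sqrt_def matrix_transpose_mul matrix_mul_assoc)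
  also have "\<dots> = X ** U ** (diag_sqrt S ** diag_sqrt S) ** transpose U ** transpose X"
    using assms(3) by (simp add: orthogonal_matrix_def matrix_mul_assoc)
  finally show ?thesis
    using diag_sqrt_mult_self[OF assms(1,2)] by (simp add: matrix_mul_assoc)
qed

lemma degree_pos:
  assumes "simple_graph E"
  shows "degree E i > 0"
proof -
  obtain j where "E i j"
    using assms unfolding simple_graph_def by blast
  then show ?thesis
    by (auto simp: degree_def card_gt_0_iff)
qed

lemma norm_laplacian_entry:
  "norm_laplacian E $ i $ j
     = (if i = j then 1 else 0) - adj_matrix E $ i $ j / (sqrt (degree E i) * sqrt (degree E j))"
  by (simp add: norm_laplacian_def degree_inv_sqrt_def diag_mat_mult_left diag_mat_mult_right
      mat_def)

lemma degree_sqrt_norm_laplacian: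
  assumes "\<forall>i. degree E i > 0"
  shows "degree_sqrt E ** norm_laplacian E ** degree_sqrt E = laplacian E"
proof -
  have "(degree_sqrt E ** norm_laplacian E ** degree_sqrt E) $ i $ j = laplacian E $ i $ j" for i j
  proof -
    have "(degree_sqrt E ** norm_laplacian E ** degree_sqrt E) $ i $ j
        = sqrt (degree E i) * norm_laplacian E $ i $ j * sqrt (degree E j)"
      by (simp add: degree_sqrt_def diag_mat_mult_left diag_mat_mult_right)
    also have "\<dots> = (if i = j then degree E i else 0) - adj_matrix E $ i $ j"
      using assms[rule_format, of i] assms[rule_format, of j]
      by (simp add: norm_laplacian_entry algebra_simps)
    finally show ?thesis
      by (simp add: laplacian_def degree_matrix_def diag_mat_def)
  qed
  then show ?thesis
    by (simp add: vec_eq_iff)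
qed

lemma laplacian_entry:
  assumes "simple_graph E"
  shows "laplacian E $ i $ j = (if E i j then - 1 else if i = j then degree E i else 0)"
proof -
  have "\<And>i. \<not> E i i"
    using assms by (simp add: simple_graph_def)
  then show ?thesis
    by (simp add: laplacian_def adj_matrix_def degree_matrix_def diag_mat_def)
qed

lemma neg_laplacian_row_Max:
  assumes "simple_graph E"
  shows "Max (range (\<lambda>k. - laplacian E $ i $ k)) = 1"
proof (rule Max_eqI)
  show "y \<le> 1" if "y \<in> range (\<lambda>k. - laplacian E $ i $ k)" for y
    using that degree_pos[OF assms, of i] by (auto simp: laplacian_entry[OF assms])
  obtain j where "E i j"
    using assms unfolding simple_graph_def by blast
  then have "- laplacian E $ i $ j = 1"
    by (simp add: laplacian_entry[OF assms])
  then show "1 \<in> range (\<lambda>k. - laplacian E $ i $ k)"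
    by (metis rangeI)
qed simp

lemma neg_laplacian_eq_row_Max_iff:
  assumes "simple_graph E"
  shows "- laplacian E $ i $ j = Max (range (\<lambda>k. - laplacian E $ i $ k)) \<longleftrightarrow> E i j"
  unfolding neg_laplacian_row_Max[OF assms]
  using degree_pos[OF assms, of i] by (auto simp: laplacian_entry[OF assms])

lemma Max_range_mult_pos:
  fixes f :: "'a::finite \<Rightarrow> real"
  assumes "c > 0"
  shows "Max (range (\<lambda>k. c * f k)) = c * Max (range f)"
proof -
  have "mono (\<lambda>x. c * x)"
    using assms by (simp add: mono_def)
  then show ?thesis
    by (simp add: mono_Max_commute image_image)
qed

lemma adjacency_identifying_if_gram_eq_laplacian:
  assumes "dk > 0" and "simple_graph E" and "P ** transpose P = laplacian E"
  shows "adjacency_identifying dk E P"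
proof -
  define c where "c = 1 / sqrt dk"
  define Pt where "Pt = c *\<^sub>R ((P ** ((-1) *\<^sub>R mat 1)) ** transpose (P ** mat 1))"
  have "c > 0" and "c \<noteq> 0"
    using assms(1) by (simp_all add: c_def)
  have "(P ** ((-1) *\<^sub>R mat 1)) ** transpose (P ** mat 1) = (-1) *\<^sub>R (P ** transpose P)"
    by (simp only: matrix_scalar_ac scalar_matrix_assoc matrix_mul_rid)
  then have Pt_entry: "Pt $ i $ k = c * (- laplacian E $ i $ k)" for i k
    by (simp add: Pt_def assms(3))
  have "\<forall>i j. Pt $ i $ j = Max (range (\<lambda>k. Pt $ i $ k)) \<longleftrightarrow> adj_matrix E $ i $ j = 1"
  proof (intro allI)
    fix i j
    show "Pt $ i $ j = Max (range (\<lambda>k. Pt $ i $ k)) \<longleftrightarrow> adj_matrix E $ i $ j = 1"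
      unfolding Pt_entry Max_range_mult_pos[OF \<open>c > 0\<close>] mult_left_cancel[OF \<open>c \<noteq> 0\<close>]
      using neg_laplacian_eq_row_Max_iff[OF assms(2), of i j]
      by (simp add: adj_matrix_def)
  qed
  then show ?thesis
    unfolding adjacency_identifying_def Let_def Pt_def c_def
    by (rule exI[of _ "(-1) *\<^sub>R mat 1", OF exI[of _ "mat 1"]])
qed

theorem lemmaF10:
  fixes E :: "'n::finite \<Rightarrow> 'n \<Rightarrow> bool"
    and U \<Sigma> M :: "real^'n^'n"
    and dk :: real
  assumes "dk > 0"
    and "simple_graph E"
    and "orthogonal_matrix U"
    and "is_diagonal \<Sigma>"
    and "\<forall>i. \<Sigma> $ i $ i \<ge> 0"
    and "norm_laplacian E = U ** \<Sigma> ** transpose U"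
    and "permutation_matrix M"
  shows "adjacency_identifying dk E (degree_sqrt E ** U ** diag_sqrt \<Sigma> ** M)"
proof -
  let ?P = "degree_sqrt E ** U ** diag_sqrt \<Sigma> ** M"
  have "transpose (degree_sqrt E) = degree_sqrt E"
    by (simp add: degree_sqrt_def)
  then have "?P ** transpose ?P = degree_sqrt E ** norm_laplacian E ** degree_sqrt E"
    using gram_of_diag_sqrt_factor[OF assms(4,5) permutation_matrix_orthogonal[OF assms(7)]]
      assms(6)
    by simp
  also have "\<dots> = laplacian E"
    using degree_pos[OF assms(2)] by (simp add: degree_sqrt_norm_laplacian)
  finally show ?thesis
    using adjacency_identifying_if_gram_eq_laplacian[OF assms(1,2)] by blast
qed

end
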